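(* Let $A$ be a hyperoperator on $\mathbb{R}^n$ on the complex Banach space $X$ and let $f\in\mathcal{E}(\mathbb{R}^n,\mathbb{R}^m)$ be proper. Then $f_*A=[0_X]$ if and only if $f(a)=0$, i.e. $f(a)x=0$ for all $x\in D_A$. In particular, $A=[0_X]$ if and only if $a=0$ (i.e. $a_jx=0$ for all $j$ and all $x\in D_A$).
   Context: $X$ is a complex Banach space, $L(X)$ the bounded operators, $e_X$ the identity. $\mathcal{D}(\mathbb{R}^k)=C_c^\infty(\mathbb{R}^k)$ (complex-valued). A hyperoperator on $\mathbb{R}^k$ is a linear map $A:\mathcal{D}(\mathbb{R}^k)\to L(X)$ which is continuous ($A(\phi_j)\to0$ in operator norm when $\phi_j\to0$ in $\mathcal{D}(\mathbb{R}^k)$), multiplicative ($A(\phi\psi)=A(\phi)A(\psi)$), and such that (i) $D_A:=\bigcup_\phi\operatorname{Im}A(\phi)$ is dense and (ii) $\bigcap_\phi\operatorname{Ker}A(\phi)=\{0\}$. For smooth $f:\mathbb{R}^n\to\mathbb{R}^m$ and $x\in D_A$ written $x=A(\phi)y$, set $f(a)x:=A(f\phi)y$ (well defined, componentwise); $a=(a_1,\dots,a_n)$ with $a_j=f_j(a)$, $f_j(\xi)=\xi_j$. For proper $f$ (preimages of compacts compact), $f_*A$ is the map $\mathcal{D}(\mathbb{R}^m)\ni\phi\mapsto A(\phi\circ f)$. $[0_X]$ denotes the map $\phi\mapsto\phi(0)e_X$ on $\mathcal{D}(\mathbb{R}^k)$ (for the appropriate $k$). *)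

theory Defs
  imports "HOL-Analysis.Analysis"
begin

section \<open>Complex Banach spaces, modelled as real Banach spaces with a complex structure\<close>

text \<open>The complex scalar multiplication on X is given by J (multiplication by i):
  c * x = Re c x + Im c (J x).\<close>

definition cscale :: "('x::real_normed_vector \<Rightarrow>\<^sub>L 'x) \<Rightarrow> complex \<Rightarrow> 'x \<Rightarrow> 'x" where
  "cscale J c x = Re c *\<^sub>R x + Im c *\<^sub>R blinfun_apply J x"

definition complex_structure :: "('x::banach \<Rightarrow>\<^sub>L 'x) \<Rightarrow> bool" where
  "complex_structure J \<longleftrightarrow>
     (\<forall>x. blinfun_apply J (blinfun_apply J x) = - x) \<and>
     (\<forall>c x. norm (cscale J c x) = cmod c * norm x)"

definition cscaleL :: "('x::real_normed_vector \<Rightarrow>\<^sub>L 'x) \<Rightarrow> complex \<Rightarrow> ('x \<Rightarrow>\<^sub>L 'x) \<Rightarrow> ('x \<Rightarrow>\<^sub>L 'x)" where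
  "cscaleL J c T = Re c *\<^sub>R T + Im c *\<^sub>R (J o\<^sub>L T)"

text \<open>L(X): bounded complex-linear operators (real bounded linear and commuting with J).\<close>
definition in_LX :: "('x::real_normed_vector \<Rightarrow>\<^sub>L 'x) \<Rightarrow> ('x \<Rightarrow>\<^sub>L 'x) \<Rightarrow> bool" where
  "in_LX J T \<longleftrightarrow> J o\<^sub>L T = T o\<^sub>L J"

fun iter_partial :: "'n::finite list \<Rightarrow> (real^'n \<Rightarrow> 'b::real_normed_vector) \<Rightarrow> real^'n \<Rightarrow> 'b" where
  "iter_partial [] g = g"
| "iter_partial (i # is) g = (\<lambda>x. frechet_derivative (iter_partial is g) (at x) (axis i 1))"

definition smooth :: "(real^'n::finite \<Rightarrow> 'b::real_normed_vector) \<Rightarrow> bool" where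
  "smooth g \<longleftrightarrow> (\<forall>is x. iter_partial is g differentiable (at x))"

definition tsupport :: "(real^'n::finite \<Rightarrow> 'b::zero) \<Rightarrow> (real^'n) set" where
  "tsupport g = closure {x. g x \<noteq> 0}"

definition test_fn :: "(real^'n::finite \<Rightarrow> complex) \<Rightarrow> bool" where
  "test_fn \<phi> \<longleftrightarrow> smooth \<phi> \<and> compact (tsupport \<phi>)"

definition D_tendsto0 :: "(nat \<Rightarrow> real^'n::finite \<Rightarrow> complex) \<Rightarrow> bool" where
  "D_tendsto0 \<phi>s \<longleftrightarrow> (\<forall>j. test_fn (\<phi>s j)) \<and>
     (\<exists>K. compact K \<and> (\<forall>j. tsupport (\<phi>s j) \<subseteq> K)) \<and>
     (\<forall>is. uniform_limit UNIV (\<lambda>j. iter_partial is (\<phi>s j)) (\<lambda>x. 0) sequentially)"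

definition hyperoperator ::
  "('x::banach \<Rightarrow>\<^sub>L 'x) \<Rightarrow> ((real^'n::finite \<Rightarrow> complex) \<Rightarrow> ('x \<Rightarrow>\<^sub>L 'x)) \<Rightarrow> bool" where
  "hyperoperator J A \<longleftrightarrow>
     (\<forall>\<phi>. test_fn \<phi> \<longrightarrow> in_LX J (A \<phi>)) \<and>
     (\<forall>\<phi> \<psi>. test_fn \<phi> \<longrightarrow> test_fn \<psi> \<longrightarrow> A (\<lambda>x. \<phi> x + \<psi> x) = A \<phi> + A \<psi>) \<and>
     (\<forall>c \<phi>. test_fn \<phi> \<longrightarrow> A (\<lambda>x. c * \<phi> x) = cscaleL J c (A \<phi>)) \<and>
     (\<forall>\<phi>s. D_tendsto0 \<phi>s \<longrightarrow> (\<lambda>j. norm (A (\<phi>s j))) \<longlonglongrightarrow> 0) \<and>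
     (\<forall>\<phi> \<psi>. test_fn \<phi> \<longrightarrow> test_fn \<psi> \<longrightarrow> A (\<lambda>x. \<phi> x * \<psi> x) = A \<phi> o\<^sub>L A \<psi>) \<and>
     closure (\<Union>\<phi>\<in>{\<phi>. test_fn \<phi>}. range (blinfun_apply (A \<phi>))) = UNIV \<and>
     (\<forall>x. (\<forall>\<phi>. test_fn \<phi> \<longrightarrow> blinfun_apply (A \<phi>) x = 0) \<longrightarrow> x = 0)"

definition D_A :: "((real^'n::finite \<Rightarrow> complex) \<Rightarrow> ('x::real_normed_vector \<Rightarrow>\<^sub>L 'x)) \<Rightarrow> 'x set" where
  "D_A A = (\<Union>\<phi>\<in>{\<phi>. test_fn \<phi>}. range (blinfun_apply (A \<phi>)))"

text \<open>f(a)x for x = A(\<phi>) y: the j-th component is A(f_j \<phi>) y (well defined by the paper;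
  here a representation is chosen).\<close>
definition fcalc ::
  "((real^'n::finite \<Rightarrow> complex) \<Rightarrow> ('x::real_normed_vector \<Rightarrow>\<^sub>L 'x)) \<Rightarrow> (real^'n \<Rightarrow> real^'m::finite) \<Rightarrow> 'x \<Rightarrow> 'm \<Rightarrow> 'x" where
  "fcalc A f x = (let (\<phi>, y) = (SOME (\<phi>, y). test_fn \<phi> \<and> x = blinfun_apply (A \<phi>) y)
                  in (\<lambda>j. blinfun_apply (A (\<lambda>\<xi>. complex_of_real (f \<xi> $ j) * \<phi> \<xi>)) y))"

definition pushforward ::
  "(real^'n::finite \<Rightarrow> real^'m::finite) \<Rightarrow> ((real^'n \<Rightarrow> complex) \<Rightarrow> 'c) \<Rightarrow> (real^'m \<Rightarrow> complex) \<Rightarrow> 'c" where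
  "pushforward f A = (\<lambda>\<psi>. A (\<psi> \<circ> f))"

text \<open>Equality to [0_X] as maps on D(R^k): B \<psi> = \<psi>(0) e_X for all test functions \<psi>.\<close>
definition is_zero_hyp ::
  "('x::real_normed_vector \<Rightarrow>\<^sub>L 'x) \<Rightarrow> ((real^'k::finite \<Rightarrow> complex) \<Rightarrow> ('x \<Rightarrow>\<^sub>L 'x)) \<Rightarrow> bool" where
  "is_zero_hyp J B \<longleftrightarrow> (\<forall>\<psi>. test_fn \<psi> \<longrightarrow> B \<psi> = cscaleL J (\<psi> 0) id_blinfun)"

definition proper_fun :: "('a::topological_space \<Rightarrow> 'b::topological_space) \<Rightarrow> bool" where
  "proper_fun f \<longleftrightarrow> (\<forall>K. compact K \<longrightarrow> compact (f -` K))"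

end

theory Submission
  imports Defs
begin

text \<open>
  If every coordinate f_j of f annihilates A, write a test function \<psi> on \<real>^m by Hadamard's
  lemma as \<psi>(\<eta>) = \<psi>(0) + \<Sum>_j \<eta>_j h_j(\<eta>) with smooth h_j; multiplicativity then gives
  A(\<psi> \<circ> f) A(\<phi>) = \<psi>(0) A(\<phi>), and density of D_A yields f_*A = [0_X]. Conversely, if
  f_*A = [0_X], take a bump \<beta> with \<beta>(0) = 1 and \<psi>(\<eta>) = \<eta>_j \<beta>(\<eta>); then
  A(f_j \<phi>) = A(f_j \<phi>) A(\<beta> \<circ> f) = A(\<phi>) A(\<psi> \<circ> f) = 0.
  Finally, condition (ii) shows that f(a)x does not depend on the representation x = A(\<phi>)y,
  so f(a) = 0 on D_A says exactly that every f_j annihilates A. The case f = id is the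
  second statement.
\<close>

section \<open>Partial derivatives and smoothness\<close>

definition partial :: "'a::real_normed_vector \<Rightarrow> ('a \<Rightarrow> 'b::real_normed_vector) \<Rightarrow> 'a \<Rightarrow> 'b" where
  "partial v g = (\<lambda>x. frechet_derivative g (at x) v)"

lemmas has_derivative_frechet_derivative = frechet_derivative_works[THEN iffD1]

lemma partial_at: "(g has_derivative D) (at x) \<Longrightarrow> partial v g x = D v"
  by (simp add: partial_def frechet_derivative_at[symmetric])

lemma partial_const: "partial v (\<lambda>x. c) = (\<lambda>x. 0)"
  by (rule ext, rule partial_at) (rule has_derivative_const)

lemma partial_linear:
  assumes "bounded_linear L" and "\<forall>x. g differentiable (at x)"
  shows "partial v (\<lambda>x. L (g x)) = (\<lambda>x. L (partial v g x))"
proof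
  fix x
  have "((\<lambda>x. L (g x)) has_derivative (\<lambda>w. L (frechet_derivative g (at x) w))) (at x)"
    using assms by (auto intro: bounded_linear.has_derivative[OF _ has_derivative_frechet_derivative])
  from partial_at[OF this, of v] show "partial v (\<lambda>x. L (g x)) x = L (partial v g x)"
    by (simp add: partial_def)
qed

lemma partial_add:
  assumes "\<forall>x. f differentiable (at x)" and "\<forall>x. g differentiable (at x)"
  shows "partial v (\<lambda>x. f x + g x) = (\<lambda>x. partial v f x + partial v g x)"
proof
  fix x
  have "((\<lambda>x. f x + g x) has_derivative
          (\<lambda>w. frechet_derivative f (at x) w + frechet_derivative g (at x) w)) (at x)"
    using assms
    by (auto intro: has_derivative_add[OF has_derivative_frechet_derivative has_derivative_frechet_derivative])
  from partial_at[OF this, of v] show "partial v (\<lambda>x. f x + g x) x = partial v f x + partial v g x"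
    by (simp add: partial_def)
qed

lemma partial_bilinear:
  assumes "bounded_bilinear B" and "\<forall>x. f differentiable (at x)" and "\<forall>x. g differentiable (at x)"
  shows "partial v (\<lambda>x. B (f x) (g x)) = (\<lambda>x. B (f x) (partial v g x) + B (partial v f x) (g x))"
proof
  fix x
  have "((\<lambda>x. B (f x) (g x)) has_derivative
          (\<lambda>w. B (f x) (frechet_derivative g (at x) w) + B (frechet_derivative f (at x) w) (g x))) (at x)"
    using assms by (auto intro: bounded_bilinear.FDERIV[OF _
          has_derivative_frechet_derivative has_derivative_frechet_derivative])
  from partial_at[OF this, of v]
  show "partial v (\<lambda>x. B (f x) (g x)) x = B (f x) (partial v g x) + B (partial v f x) (g x)"
    by (simp add: partial_def)
qed

lemma partial_eq_sum_Basis: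
  fixes g :: "'a::euclidean_space \<Rightarrow> 'b::real_normed_vector"
  assumes "g differentiable (at x)"
  shows "partial v g x = (\<Sum>b\<in>Basis. (v \<bullet> b) *\<^sub>R partial b g x)"
proof -
  have "frechet_derivative g (at x) (\<Sum>b\<in>Basis. (v \<bullet> b) *\<^sub>R b) =
          (\<Sum>b\<in>Basis. (v \<bullet> b) *\<^sub>R frechet_derivative g (at x) b)"
    using linear_frechet_derivative[OF assms] by (simp add: linear_sum linear_scale)
  then show ?thesis
    by (simp add: partial_def euclidean_representation)
qed

lemma partial_compose:
  fixes \<psi> :: "'a::euclidean_space \<Rightarrow> 'b::real_normed_vector" and f :: "'c::real_normed_vector \<Rightarrow> 'a"
  assumes "\<forall>y. \<psi> differentiable (at y)" and "\<forall>x. f differentiable (at x)"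
  shows "partial v (\<lambda>x. \<psi> (f x)) = (\<lambda>x. \<Sum>b\<in>Basis. partial v (\<lambda>x. f x \<bullet> b) x *\<^sub>R partial b \<psi> (f x))"
proof
  fix x
  have "((\<lambda>x. \<psi> (f x)) has_derivative (\<lambda>w. frechet_derivative \<psi> (at (f x)) (frechet_derivative f (at x) w)))
          (at x)"
    using diff_chain_at[OF has_derivative_frechet_derivative[of f "at x"]
        has_derivative_frechet_derivative[of \<psi> "at (f x)"]] assms
    by (simp add: o_def)
  from partial_at[OF this, of v]
  have "partial v (\<lambda>x. \<psi> (f x)) x = (\<Sum>b\<in>Basis. (partial v f x \<bullet> b) *\<^sub>R partial b \<psi> (f x))"
    using partial_eq_sum_Basis[of \<psi> "f x" "partial v f x"] assms(1) by (simp add: partial_def)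
  then show "partial v (\<lambda>x. \<psi> (f x)) x = (\<Sum>b\<in>Basis. partial v (\<lambda>x. f x \<bullet> b) x *\<^sub>R partial b \<psi> (f x))"
    using partial_linear[OF bounded_linear_inner_left assms(2)] by simp
qed

text \<open>
  The
  basis-indexed version below makes sense on every Euclidean space, so it also covers the
  functions on \<real> from which the bump function is built.
\<close>

fun differentiable_upto :: "nat \<Rightarrow> ('a::euclidean_space \<Rightarrow> 'b::real_normed_vector) \<Rightarrow> bool" where
  "differentiable_upto 0 g \<longleftrightarrow> True"
| "differentiable_upto (Suc k) g \<longleftrightarrow>
     (\<forall>x. g differentiable (at x)) \<and> (\<forall>b\<in>Basis. differentiable_upto k (partial b g))"

definition infinitely_differentiable :: "('a::euclidean_space \<Rightarrow> 'b::real_normed_vector) \<Rightarrow> bool" where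
  "infinitely_differentiable g \<longleftrightarrow> (\<forall>k. differentiable_upto k g)"

lemma differentiable_upto_Suc_imp: "differentiable_upto (Suc k) g \<Longrightarrow> differentiable_upto k g"
  by (induction k arbitrary: g) auto

lemma infinitely_differentiableD:
  assumes "infinitely_differentiable g"
  shows "g differentiable (at x)" and "b \<in> Basis \<Longrightarrow> infinitely_differentiable (partial b g)"
proof -
  have "differentiable_upto (Suc k) g" for k
    using assms unfolding infinitely_differentiable_def by blast
  then show "g differentiable (at x)" and "b \<in> Basis \<Longrightarrow> infinitely_differentiable (partial b g)"
    unfolding infinitely_differentiable_def by auto
qed

lemma differentiable_upto_const: "differentiable_upto k (\<lambda>x. c)"
  by (induction k arbitrary: c) (simp_all add: partial_const)

lemma differentiable_upto_linear:
  "bounded_linear L \<Longrightarrow> differentiable_upto k g \<Longrightarrow> differentiable_upto k (\<lambda>x. L (g x))"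
proof (induction k arbitrary: g)
  case (Suc k)
  have "(\<lambda>x. L (g x)) differentiable (at x)" for x
    using Suc.prems
    by (auto intro: differentiableI[OF bounded_linear.has_derivative[OF _ has_derivative_frechet_derivative]])
  then show ?case
    using Suc by (simp add: partial_linear)
qed simp

lemma differentiable_upto_add:
  "differentiable_upto k f \<Longrightarrow> differentiable_upto k g \<Longrightarrow> differentiable_upto k (\<lambda>x. f x + g x)"
  by (induction k arbitrary: f g) (simp_all add: partial_add)

lemma differentiable_upto_diff:
  "differentiable_upto k f \<Longrightarrow> differentiable_upto k g \<Longrightarrow> differentiable_upto k (\<lambda>x. f x - g x)"
  using differentiable_upto_add[of k f "\<lambda>x. - g x"]
    differentiable_upto_linear[OF bounded_linear_minus[OF bounded_linear_ident], of k g]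
  by simp

lemma differentiable_upto_bilinear:
  assumes "bounded_bilinear B"
  shows "differentiable_upto k f \<Longrightarrow> differentiable_upto k g \<Longrightarrow> differentiable_upto k (\<lambda>x. B (f x) (g x))"
proof (induction k arbitrary: f g)
  case (Suc k)
  have "(\<lambda>x. B (f x) (g x)) differentiable (at x)" for x
    using Suc.prems
    by (auto intro: differentiableI[OF bounded_bilinear.FDERIV[OF assms
          has_derivative_frechet_derivative has_derivative_frechet_derivative]])
  moreover have "differentiable_upto k f" "differentiable_upto k g"
    using Suc.prems differentiable_upto_Suc_imp by blast+
  ultimately show ?case
    using Suc by (simp add: partial_bilinear[OF assms] differentiable_upto_add)
qed simp

lemma differentiable_upto_sum:
  "finite S \<Longrightarrow> (\<And>j. j \<in> S \<Longrightarrow> differentiable_upto k (g j)) \<Longrightarrow>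
     differentiable_upto k (\<lambda>x. \<Sum>j\<in>S. g j x)"
  by (induction S rule: finite_induct) (simp_all add: differentiable_upto_const differentiable_upto_add)

lemma differentiable_upto_compose:
  fixes \<psi> :: "'a::euclidean_space \<Rightarrow> 'b::real_normed_vector" and f :: "'c::euclidean_space \<Rightarrow> 'a"
  shows "differentiable_upto k \<psi> \<Longrightarrow> differentiable_upto k f \<Longrightarrow> differentiable_upto k (\<lambda>x. \<psi> (f x))"
proof (induction k arbitrary: \<psi> f)
  case (Suc k)
  have d\<psi>: "\<forall>y. \<psi> differentiable (at y)" and df: "\<forall>x. f differentiable (at x)"
    using Suc.prems by auto
  have "(\<lambda>x. \<psi> (f x)) differentiable (at x)" for x
    using differentiable_chain_at[of f x \<psi>] d\<psi> df by (simp add: o_def)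
  moreover have "differentiable_upto k (partial v (\<lambda>x. \<psi> (f x)))" if "v \<in> Basis" for v
    unfolding partial_compose[OF d\<psi> df]
  proof (intro differentiable_upto_sum differentiable_upto_bilinear[OF bounded_bilinear_scaleR] finite_Basis)
    fix b :: 'a assume "b \<in> Basis"
    show "differentiable_upto k (\<lambda>x. partial b \<psi> (f x))"
      using Suc.IH Suc.prems(1) differentiable_upto_Suc_imp[OF Suc.prems(2)] \<open>b \<in> Basis\<close> by simp
    show "differentiable_upto k (partial v (\<lambda>x. f x \<bullet> b))"
      using Suc.prems that partial_linear[OF bounded_linear_inner_left df]
      by (simp add: differentiable_upto_linear[OF bounded_linear_inner_left])
  qed
  ultimately show ?case by simp
qed simp

lemma infinitely_differentiable_const: "infinitely_differentiable (\<lambda>x. c)"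
  by (simp add: infinitely_differentiable_def differentiable_upto_const)

lemma infinitely_differentiable_id: "infinitely_differentiable (\<lambda>x. x)"
proof -
  have "partial v (\<lambda>x. x) = (\<lambda>x. v)" for v :: 'a
    by (intro ext partial_at has_derivative_ident)
  then have "differentiable_upto (Suc k) (\<lambda>x::'a. x)" for k
    by (simp add: differentiable_upto_const)
  then show ?thesis
    unfolding infinitely_differentiable_def by (metis differentiable_upto_Suc_imp)
qed

lemma infinitely_differentiable_linear:
  "bounded_linear L \<Longrightarrow> infinitely_differentiable g \<Longrightarrow> infinitely_differentiable (\<lambda>x. L (g x))"
  by (simp add: infinitely_differentiable_def differentiable_upto_linear)

lemma infinitely_differentiable_add:
  "infinitely_differentiable f \<Longrightarrow> infinitely_differentiable g \<Longrightarrow>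
     infinitely_differentiable (\<lambda>x. f x + g x)"
  by (simp add: infinitely_differentiable_def differentiable_upto_add)

lemma infinitely_differentiable_diff:
  "infinitely_differentiable f \<Longrightarrow> infinitely_differentiable g \<Longrightarrow>
     infinitely_differentiable (\<lambda>x. f x - g x)"
  by (simp add: infinitely_differentiable_def differentiable_upto_diff)

lemma infinitely_differentiable_bilinear:
  "bounded_bilinear B \<Longrightarrow> infinitely_differentiable f \<Longrightarrow> infinitely_differentiable g \<Longrightarrow>
     infinitely_differentiable (\<lambda>x. B (f x) (g x))"
  by (simp add: infinitely_differentiable_def differentiable_upto_bilinear)

lemmas infinitely_differentiable_mult = infinitely_differentiable_bilinear[OF bounded_bilinear_mult]

lemma infinitely_differentiable_compose:
  fixes \<psi> :: "'a::euclidean_space \<Rightarrow> 'b::real_normed_vector" and f :: "'c::euclidean_space \<Rightarrow> 'a"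
  shows "infinitely_differentiable \<psi> \<Longrightarrow> infinitely_differentiable f \<Longrightarrow>
           infinitely_differentiable (\<lambda>x. \<psi> (f x))"
  by (simp add: infinitely_differentiable_def differentiable_upto_compose)

lemma iter_partial_snoc: "iter_partial (is @ [i]) g = iter_partial is (partial (axis i 1) g)"
  by (induction "is") (simp_all add: partial_def)

lemma Basis_vec_iff_axis: "(b :: real^'n) \<in> Basis \<longleftrightarrow> (\<exists>i. b = axis i 1)"
  by (simp add: Basis_vec_def)

lemma sum_Basis_vec: "(\<Sum>b\<in>(Basis :: (real^'n) set). F b) = (\<Sum>j\<in>UNIV. F (axis j 1))"
  by (simp add: Basis_vec_def UNION_singleton_eq_range sum.reindex axis_eq_axis inj_on_def)

lemma smooth_partial: "smooth g \<Longrightarrow> smooth (partial (axis i 1) g)"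
  unfolding smooth_def by (metis iter_partial_snoc)

lemma smooth_iff_infinitely_differentiable: "smooth g \<longleftrightarrow> infinitely_differentiable g"
proof
  assume "smooth g"
  have "differentiable_upto k g" if "smooth g" for k and g :: "real^'n \<Rightarrow> 'b"
    using that
  proof (induction k arbitrary: g)
    case (Suc k)
    have "g differentiable (at x)" for x
      using Suc.prems iter_partial.simps(1)[of g] unfolding smooth_def by metis
    then show ?case
      using Suc.IH smooth_partial[OF Suc.prems] by (auto simp: Basis_vec_iff_axis)
  qed simp
  then show "infinitely_differentiable g"
    using \<open>smooth g\<close> unfolding infinitely_differentiable_def by blast
next
  assume "infinitely_differentiable g"
  have "iter_partial is g differentiable (at x)" if "infinitely_differentiable g"
    for "is" x and g :: "real^'n \<Rightarrow> 'b"
    using that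
  proof (induction "is" arbitrary: g rule: rev_induct)
    case Nil
    then show ?case by (simp add: infinitely_differentiableD)
  next
    case (snoc i "is")
    then show ?case by (simp add: iter_partial_snoc infinitely_differentiableD)
  qed
  then show "smooth g"
    using \<open>infinitely_differentiable g\<close> unfolding smooth_def by blast
qed

lemma smooth_const: "smooth (\<lambda>x. c)"
  by (simp add: smooth_iff_infinitely_differentiable infinitely_differentiable_const)

lemma smooth_id: "smooth (\<lambda>x. x)"
  by (simp add: smooth_iff_infinitely_differentiable infinitely_differentiable_id)

lemma smooth_compose:
  fixes f :: "real^'n::finite \<Rightarrow> real^'m::finite"
  shows "smooth \<psi> \<Longrightarrow> smooth f \<Longrightarrow> smooth (\<lambda>x. \<psi> (f x))"
  by (simp add: smooth_iff_infinitely_differentiable infinitely_differentiable_compose)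

lemma smooth_of_real_component: "smooth f \<Longrightarrow> smooth (\<lambda>x. complex_of_real (f x $ j))"
  unfolding smooth_iff_infinitely_differentiable
  by (rule infinitely_differentiable_linear[OF
        bounded_linear_compose[OF bounded_linear_of_real bounded_linear_vec_nth]])

section \<open>Test functions\<close>

lemma in_tsupport: "g x \<noteq> 0 \<Longrightarrow> x \<in> tsupport g"
  unfolding tsupport_def by (rule closure_subset[THEN subsetD]) simp

lemma compact_tsupport_if_subset: "compact K \<Longrightarrow> {x. g x \<noteq> 0} \<subseteq> K \<Longrightarrow> compact (tsupport g)"
  unfolding tsupport_def
  by (meson bounded_subset closed_closure closure_minimal compact_eq_bounded_closed)

lemma test_fn_zero: "test_fn (\<lambda>x. 0)"
  by (simp add: test_fn_def tsupport_def smooth_const)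

lemma test_fn_mult:
  assumes "smooth a" and "test_fn \<phi>"
  shows "test_fn (\<lambda>x. a x * \<phi> x)"
  unfolding test_fn_def
proof
  show "smooth (\<lambda>x. a x * \<phi> x)"
    using assms infinitely_differentiable_mult[of a \<phi>]
    by (simp add: test_fn_def smooth_iff_infinitely_differentiable)
  have "{x. a x * \<phi> x \<noteq> 0} \<subseteq> tsupport \<phi>"
    by (auto intro: in_tsupport)
  with assms(2) show "compact (tsupport (\<lambda>x. a x * \<phi> x))"
    unfolding test_fn_def by (blast intro: compact_tsupport_if_subset)
qed

lemma test_fn_add:
  assumes "test_fn \<phi>" and "test_fn \<psi>"
  shows "test_fn (\<lambda>x. \<phi> x + \<psi> x)"
  unfolding test_fn_def
proof
  show "smooth (\<lambda>x. \<phi> x + \<psi> x)"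
    using assms infinitely_differentiable_add[of \<phi> \<psi>]
    by (simp add: test_fn_def smooth_iff_infinitely_differentiable)
  have "{x. \<phi> x + \<psi> x \<noteq> 0} \<subseteq> {x. \<phi> x \<noteq> 0} \<union> {x. \<psi> x \<noteq> 0}"
    by auto
  also have "\<dots> \<subseteq> tsupport \<phi> \<union> tsupport \<psi>"
    using in_tsupport by blast
  finally have "{x. \<phi> x + \<psi> x \<noteq> 0} \<subseteq> tsupport \<phi> \<union> tsupport \<psi>" .
  moreover have "compact (tsupport \<phi> \<union> tsupport \<psi>)"
    using assms by (simp add: test_fn_def compact_Un)
  ultimately show "compact (tsupport (\<lambda>x. \<phi> x + \<psi> x))"
    by (blast intro: compact_tsupport_if_subset)
qed

lemma test_fn_sum: "finite S \<Longrightarrow> (\<And>j. j \<in> S \<Longrightarrow> test_fn (g j)) \<Longrightarrow> test_fn (\<lambda>x. \<Sum>j\<in>S. g j x)"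
  by (induction S rule: finite_induct) (auto intro: test_fn_add test_fn_zero)

lemma test_fn_compose:
  fixes f :: "real^'n::finite \<Rightarrow> real^'m::finite"
  assumes "smooth f" and "proper_fun f" and "test_fn \<psi>"
  shows "test_fn (\<lambda>x. \<psi> (f x))"
  unfolding test_fn_def
proof
  show "smooth (\<lambda>x. \<psi> (f x))"
    using assms by (simp add: test_fn_def smooth_compose)
  have "{x. \<psi> (f x) \<noteq> 0} \<subseteq> f -` tsupport \<psi>"
    by (auto intro: in_tsupport)
  moreover have "compact (f -` tsupport \<psi>)"
    using assms(2,3) by (simp add: proper_fun_def test_fn_def)
  ultimately show "compact (tsupport (\<lambda>x. \<psi> (f x)))"
    by (blast intro: compact_tsupport_if_subset)
qed

section \<open>A bump function\<close>

text \<open>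
  The derivative of each member of this family is a combination of two others, so all of them
  are infinitely differentiable.
\<close>

definition exp_flat :: "nat \<Rightarrow> real \<Rightarrow> real" where
  "exp_flat j t = (if t > 0 then exp (- inverse t) * inverse t ^ j else 0)"

lemma exp_flat_tendsto_0: "(exp_flat j \<longlongrightarrow> 0) (at 0)"
proof (rule filterlim_split_at)
  have "((\<lambda>t. inverse t ^ j / exp (inverse t)) \<longlongrightarrow> 0) (at_right (0::real))"
    using filterlim_compose[OF tendsto_power_div_exp_0 filterlim_inverse_at_top_right]
    by (simp add: o_def)
  moreover have "eventually (\<lambda>t. inverse t ^ j / exp (inverse t) = exp_flat j t) (at_right 0)"
    using eventually_at_right_less[of "0::real"]
    by eventually_elim (simp add: exp_flat_def exp_minus field_simps)
  ultimately show "(exp_flat j \<longlongrightarrow> 0) (at_right 0)"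
    by (rule Lim_transform_eventually)
  have "eventually (\<lambda>t. 0 = exp_flat j t) (at_left (0::real))"
    using eventually_at_left_real[of "-1" "0::real"] by (auto elim: eventually_mono simp: exp_flat_def)
  then show "(exp_flat j \<longlongrightarrow> 0) (at_left 0)"
    by (rule Lim_transform_eventually[OF tendsto_const])
qed

lemma exp_flat_has_derivative:
  "(exp_flat j has_real_derivative (exp_flat (j + 2) t - real j * exp_flat (j + 1) t)) (at t)"
proof (cases t "0::real" rule: linorder_cases)
  case less
  then have "exp_flat (j + 2) t - real j * exp_flat (j + 1) t = 0"
    by (simp add: exp_flat_def)
  moreover have "(exp_flat j has_real_derivative 0) (at t)"
    by (rule has_field_derivative_transform_within_open[of "\<lambda>t. 0" _ _ "{..<0}"])
      (use less in \<open>auto simp: exp_flat_def\<close>)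
  ultimately show ?thesis by simp
next
  case equal
  have "eventually (\<lambda>y. exp_flat (Suc j) y = (exp_flat j y - exp_flat j 0) / (y - 0)) (at 0)"
    using eventually_at[of _ 0] by (auto simp: exp_flat_def field_simps)
  then have "((\<lambda>y. (exp_flat j y - exp_flat j 0) / (y - 0)) \<longlongrightarrow> 0) (at 0)"
    by (rule Lim_transform_eventually[OF exp_flat_tendsto_0])
  then show ?thesis
    using equal by (simp add: has_field_derivative_iff exp_flat_def)
next
  case greater
  have "((\<lambda>t. exp (- inverse t) * inverse t ^ j) has_real_derivative
          exp_flat (j + 2) t - real j * exp_flat (j + 1) t) (at t)"
    using greater by (auto intro!: derivative_eq_intros
        simp: exp_flat_def power_eq_if[of "inverse t" j] algebra_simps power2_eq_square)
  then show ?thesis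
    by (rule has_field_derivative_transform_within_open[where S="{0<..}"])
      (use greater in \<open>auto simp: exp_flat_def\<close>)
qed

lemma infinitely_differentiable_exp_flat: "infinitely_differentiable (exp_flat j)"
proof -
  have "differentiable_upto k (exp_flat j)" for k j
  proof (induction k arbitrary: j)
    case (Suc k)
    note D = has_field_derivative_imp_has_derivative[OF exp_flat_has_derivative]
    have "partial 1 (exp_flat j) = (\<lambda>t. exp_flat (j + 2) t - real j * exp_flat (j + 1) t)"
      using partial_at[OF D] by auto
    moreover have "differentiable_upto k (\<lambda>t. exp_flat (j + 2) t - real j * exp_flat (j + 1) t)"
      using Suc.IH
      by (intro differentiable_upto_diff differentiable_upto_linear[OF bounded_linear_mult_right])
    ultimately show ?case
      using differentiableI[OF D] by (simp add: Basis_real_def)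
  qed simp
  then show ?thesis
    unfolding infinitely_differentiable_def by blast
qed

lemma exists_test_fn_eq_1_at_0:
  "\<exists>\<beta> :: real^'n::finite \<Rightarrow> real. test_fn (\<lambda>x. complex_of_real (\<beta> x)) \<and> \<beta> 0 = 1"
proof (intro exI conjI)
  define q :: "real^'n \<Rightarrow> real" where "q x = 1 - x \<bullet> x" for x
  define \<beta> :: "real^'n \<Rightarrow> real" where "\<beta> x = exp 1 * exp_flat 0 (q x)" for x
  have "infinitely_differentiable q"
    unfolding q_def
    using infinitely_differentiable_diff[OF infinitely_differentiable_const
        infinitely_differentiable_bilinear[OF bounded_bilinear_inner
          infinitely_differentiable_id infinitely_differentiable_id]] .
  then have "infinitely_differentiable \<beta>"
    unfolding \<beta>_def
    by (rule infinitely_differentiable_mult[OF infinitely_differentiable_const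
          infinitely_differentiable_compose[OF infinitely_differentiable_exp_flat]])
  then have "smooth (\<lambda>x. complex_of_real (\<beta> x))"
    using infinitely_differentiable_linear[OF bounded_linear_of_real]
    by (simp add: smooth_iff_infinitely_differentiable)
  moreover have "{x. complex_of_real (\<beta> x) \<noteq> 0} \<subseteq> cball 0 1"
    by (auto simp: \<beta>_def q_def exp_flat_def power2_norm_eq_inner[symmetric] abs_square_less_1)
  ultimately show "test_fn (\<lambda>x. complex_of_real (\<beta> x))"
    unfolding test_fn_def by (blast intro: compact_tsupport_if_subset[OF compact_cball])
  show "\<beta> 0 = 1"
    by (simp add: \<beta>_def q_def exp_flat_def exp_minus)
qed

section \<open>Hadamard's lemma\<close>

lemma continuous_on_partial:
  "differentiable_upto 2 g \<Longrightarrow> b \<in> Basis \<Longrightarrow> continuous_on S (partial b g)"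
  by (auto simp: numeral_2_eq_2
      intro!: continuous_at_imp_continuous_on differentiable_imp_continuous_within)

lemma blinfun_apply_Blinfun_frechet_derivative:
  "g differentiable (at z) \<Longrightarrow> blinfun_apply (Blinfun (frechet_derivative g (at z))) = frechet_derivative g (at z)"
  by (rule bounded_linear_Blinfun_apply[OF has_derivative_bounded_linear[OF has_derivative_frechet_derivative]])

lemma continuous_on_Blinfun_frechet_derivative:
  fixes g :: "'a::euclidean_space \<Rightarrow> 'b::real_normed_vector"
  assumes "differentiable_upto 2 g"
  shows "continuous_on S (\<lambda>z. Blinfun (frechet_derivative g (at z)))"
proof (intro continuous_at_imp_continuous_on ballI continuous_blinfun_componentwiseI1)
  fix z b :: 'a assume "b \<in> Basis"
  then have "continuous_on UNIV (partial b g)"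
    by (rule continuous_on_partial[OF assms])
  moreover have "g differentiable (at x)" for x
    using assms by (simp add: numeral_2_eq_2)
  ultimately show "continuous (at z) (\<lambda>x. Blinfun (frechet_derivative g (at x)) b)"
    by (simp add: blinfun_apply_Blinfun_frechet_derivative partial_def[symmetric]
        continuous_on_eq_continuous_at)
qed

definition ray_integral :: "nat \<Rightarrow> ('a::euclidean_space \<Rightarrow> 'b::banach) \<Rightarrow> 'a \<Rightarrow> 'b" where
  "ray_integral k g \<eta> = integral {0..1} (\<lambda>t. (t ^ k) *\<^sub>R g (t *\<^sub>R \<eta>))"

lemma has_derivative_ray_integral:
  fixes g :: "'a::euclidean_space \<Rightarrow> 'b::banach"
  assumes g: "differentiable_upto 2 g"
  shows "(ray_integral k g has_derivative (\<lambda>v. ray_integral (Suc k) (partial v g) \<eta>)) (at \<eta>)"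
proof -
  have dg: "g differentiable (at z)" for z
    using g by (simp add: numeral_2_eq_2)
  define Dg where "Dg z = Blinfun (frechet_derivative g (at z))" for z
  have Dg_apply: "blinfun_apply (Dg z) = frechet_derivative g (at z)" for z
    unfolding Dg_def using dg by (rule blinfun_apply_Blinfun_frechet_derivative)
  have cont_Dg: "continuous_on UNIV (\<lambda>p::'a \<times> real. Dg (snd p *\<^sub>R fst p))"
    unfolding Dg_def
    by (rule continuous_on_compose2[OF continuous_on_Blinfun_frechet_derivative[OF g]])
      (auto intro!: continuous_intros)
  define fx where "fx \<eta> t = (t ^ Suc k) *\<^sub>R Dg (t *\<^sub>R \<eta>)" for \<eta> :: 'a and t :: real
  have der: "((\<lambda>\<eta>. (t ^ k) *\<^sub>R g (t *\<^sub>R \<eta>)) has_derivative blinfun_apply (fx \<eta> t)) (at \<eta> within UNIV)"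
    for \<eta> t
  proof -
    have "((\<lambda>\<eta>. g (t *\<^sub>R \<eta>)) has_derivative (\<lambda>v. frechet_derivative g (at (t *\<^sub>R \<eta>)) (t *\<^sub>R v))) (at \<eta>)"
      using diff_chain_at[OF has_derivative_scaleR_right[OF has_derivative_ident]
          has_derivative_frechet_derivative[OF dg]] by (simp add: o_def)
    from has_derivative_scaleR_right[OF this, of "t ^ k"] show ?thesis
      by (simp add: fx_def Dg_apply[symmetric] blinfun.scaleR_right scaleR_blinfun.rep_eq mult.commute)
  qed
  have "continuous_on UNIV g"
    using dg by (simp add: differentiable_imp_continuous_on differentiable_on_def differentiable_at_withinI)
  then have "continuous_on (cbox 0 1) (\<lambda>t. g (t *\<^sub>R \<eta>))" for \<eta> :: 'a
    by (rule continuous_on_compose2) (auto intro!: continuous_intros)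
  then have int: "(\<lambda>t. (t ^ k) *\<^sub>R g (t *\<^sub>R \<eta>)) integrable_on cbox 0 1" for \<eta> :: 'a
    by (intro integrable_continuous continuous_on_scaleR continuous_on_power continuous_on_id)
  have "continuous_on (UNIV \<times> cbox 0 1) (\<lambda>(\<eta>, t). fx \<eta> t)"
    unfolding fx_def case_prod_beta
    by (intro continuous_on_scaleR continuous_on_power continuous_on_snd continuous_on_id
        continuous_on_subset[OF cont_Dg]) auto
  then have "(ray_integral k g has_derivative blinfun_apply (integral (cbox 0 1) (fx \<eta>))) (at \<eta>)"
    unfolding ray_integral_def[abs_def] using leibniz_rule[where U=UNIV, OF der int] by simp
  moreover have "blinfun_apply (integral (cbox 0 1) (fx \<eta>)) = (\<lambda>v. ray_integral (Suc k) (partial v g) \<eta>)"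
  proof
    fix v
    have "continuous_on (cbox 0 1) (\<lambda>t. Dg (t *\<^sub>R \<eta>))"
      using continuous_on_compose2[OF cont_Dg, of "cbox 0 1" "\<lambda>t. (\<eta>, t)"]
      by (simp add: continuous_on_Pair continuous_on_const continuous_on_id)
    then have "blinfun_apply (integral (cbox 0 1) (fx \<eta>)) v = integral (cbox 0 1) (\<lambda>t. fx \<eta> t v)"
      unfolding fx_def
      by (intro blinfun_apply_integral integrable_continuous continuous_on_scaleR continuous_on_power
          continuous_on_id)
    then show "blinfun_apply (integral (cbox 0 1) (fx \<eta>)) v = ray_integral (Suc k) (partial v g) \<eta>"
      by (simp add: ray_integral_def fx_def Dg_apply partial_def scaleR_blinfun.rep_eq)
  qed
  ultimately show ?thesis
    by simp
qed

lemma partial_ray_integral: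
  "differentiable_upto 2 g \<Longrightarrow> partial v (ray_integral k g) = ray_integral (Suc k) (partial v g)"
  using partial_at[OF has_derivative_ray_integral] by (intro ext) blast

lemma infinitely_differentiable_ray_integral:
  fixes g :: "'a::euclidean_space \<Rightarrow> 'b::banach"
  assumes "infinitely_differentiable g"
  shows "infinitely_differentiable (ray_integral k g)"
proof -
  have "differentiable_upto N (ray_integral k g)" if "infinitely_differentiable g"
    for N k and g :: "'a \<Rightarrow> 'b"
    using that
  proof (induction N arbitrary: g k)
    case (Suc N)
    then have g2: "differentiable_upto 2 g"
      by (simp add: infinitely_differentiable_def)
    have "ray_integral k g differentiable (at \<eta>)" for \<eta>
      using has_derivative_ray_integral[OF g2] by (rule differentiableI)
    moreover have "differentiable_upto N (partial b (ray_integral k g))" if "b \<in> Basis" for b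
      using Suc.IH infinitely_differentiableD(2)[OF Suc.prems that]
      by (simp add: partial_ray_integral[OF g2])
    ultimately show ?case by simp
  qed simp
  then show ?thesis
    using assms unfolding infinitely_differentiable_def by blast
qed

lemma hadamard:
  fixes \<psi> :: "'a::euclidean_space \<Rightarrow> 'b::banach"
  assumes "differentiable_upto 2 \<psi>"
  shows "\<psi> \<eta> = \<psi> 0 + (\<Sum>b\<in>Basis. (\<eta> \<bullet> b) *\<^sub>R ray_integral 0 (partial b \<psi>) \<eta>)"
proof -
  have d\<psi>: "\<psi> differentiable (at z)" for z
    using assms by (simp add: numeral_2_eq_2)
  define F' where "F' t = (\<Sum>b\<in>Basis. (\<eta> \<bullet> b) *\<^sub>R partial b \<psi> (t *\<^sub>R \<eta>))" for t :: real
  have "((\<lambda>t. \<psi> (t *\<^sub>R \<eta>)) has_vector_derivative F' t) (at t within {0..1})" for t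
  proof -
    have "((\<lambda>t. \<psi> (t *\<^sub>R \<eta>)) has_derivative (\<lambda>s. frechet_derivative \<psi> (at (t *\<^sub>R \<eta>)) (s *\<^sub>R \<eta>))) (at t)"
      using diff_chain_at[OF has_derivative_scaleR_left[OF has_derivative_ident]
          has_derivative_frechet_derivative[OF d\<psi>]] by (simp add: o_def)
    moreover have "frechet_derivative \<psi> (at (t *\<^sub>R \<eta>)) (s *\<^sub>R \<eta>) = s *\<^sub>R F' t" for s
      using linear_frechet_derivative[OF d\<psi>] partial_eq_sum_Basis[OF d\<psi>, of \<eta>]
      by (simp add: linear_scale F'_def partial_def)
    ultimately show ?thesis
      by (simp add: has_vector_derivative_def has_derivative_at_withinI)
  qed
  then have "(F' has_integral \<psi> \<eta> - \<psi> 0) {0..1}"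
    using fundamental_theorem_of_calculus[of 0 1 "\<lambda>t. \<psi> (t *\<^sub>R \<eta>)" F'] by simp
  moreover have "(F' has_integral (\<Sum>b\<in>Basis. (\<eta> \<bullet> b) *\<^sub>R ray_integral 0 (partial b \<psi>) \<eta>)) {0..1}"
    unfolding F'_def
  proof (intro has_integral_sum finite_Basis has_integral_cmul)
    fix b :: 'a assume "b \<in> Basis"
    have "continuous_on {0..1} (\<lambda>t. partial b \<psi> (t *\<^sub>R \<eta>))"
      by (rule continuous_on_compose2[OF continuous_on_partial[OF assms \<open>b \<in> Basis\<close>, of UNIV]])
        (auto intro!: continuous_intros)
    then show "((\<lambda>t. partial b \<psi> (t *\<^sub>R \<eta>)) has_integral ray_integral 0 (partial b \<psi>) \<eta>) {0..1}"
      unfolding ray_integral_def using integrable_integral[OF integrable_continuous_interval] by simp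
  qed
  ultimately show ?thesis
    by (metis has_integral_unique add.commute diff_add_cancel)
qed

lemma hadamard_coordinates:
  fixes \<psi> :: "real^'m::finite \<Rightarrow> 'b::banach"
  assumes "smooth \<psi>"
  obtains h where "\<And>j. smooth (h j)" and "\<And>\<eta>. \<psi> \<eta> = \<psi> 0 + (\<Sum>j\<in>UNIV. (\<eta> $ j) *\<^sub>R h j \<eta>)"
proof
  define h where "h j = ray_integral 0 (partial (axis j 1) \<psi>)" for j
  have \<psi>: "infinitely_differentiable \<psi>"
    using assms by (simp add: smooth_iff_infinitely_differentiable)
  then show "smooth (h j)" for j
    unfolding h_def smooth_iff_infinitely_differentiable
    by (intro infinitely_differentiable_ray_integral infinitely_differentiableD(2)) auto
  show "\<psi> \<eta> = \<psi> 0 + (\<Sum>j\<in>UNIV. (\<eta> $ j) *\<^sub>R h j \<eta>)" for \<eta>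
    using hadamard[of \<psi> \<eta>] \<psi>
    by (simp add: h_def sum_Basis_vec inner_axis infinitely_differentiable_def)
qed

section \<open>Hyperoperators\<close>

lemma cscaleL_id_comp: "cscaleL J c id_blinfun o\<^sub>L T = cscaleL J c T"
  by (rule blinfun_eqI) (simp add: cscaleL_def blinfun.add_left blinfun.scaleR_left)

lemma blinfun_eq_on_dense:
  fixes T S :: "'a::real_normed_vector \<Rightarrow>\<^sub>L 'b::real_normed_vector"
  assumes "closure D = UNIV" and "\<And>x. x \<in> D \<Longrightarrow> T x = S x"
  shows "T = S"
proof -
  have "closed {x. T x = S x}"
    by (intro closed_Collect_eq linear_continuous_on blinfun.bounded_linear_right)
  moreover have "D \<subseteq> {x. T x = S x}"
    using assms(2) by auto
  ultimately have "closure D \<subseteq> {x. T x = S x}"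
    by (rule closure_minimal[rotated])
  then show ?thesis
    using assms(1) by (auto intro: blinfun_eqI)
qed

locale hyperop =
  fixes J :: "'x::banach \<Rightarrow>\<^sub>L 'x" and A :: "(real^'n::finite \<Rightarrow> complex) \<Rightarrow> ('x \<Rightarrow>\<^sub>L 'x)"
  assumes hyperoperator: "hyperoperator J A"
begin

lemma A_add: "test_fn \<phi> \<Longrightarrow> test_fn \<psi> \<Longrightarrow> A (\<lambda>x. \<phi> x + \<psi> x) = A \<phi> + A \<psi>"
  using hyperoperator by (simp add: hyperoperator_def)

lemma A_cmult: "test_fn \<phi> \<Longrightarrow> A (\<lambda>x. c * \<phi> x) = cscaleL J c (A \<phi>)"
  using hyperoperator by (simp add: hyperoperator_def)

lemma A_mult: "test_fn \<phi> \<Longrightarrow> test_fn \<psi> \<Longrightarrow> A (\<lambda>x. \<phi> x * \<psi> x) = A \<phi> o\<^sub>L A \<psi>"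
  using hyperoperator by (simp add: hyperoperator_def)

lemma closure_D_A: "closure (D_A A) = UNIV"
  using hyperoperator by (simp add: hyperoperator_def D_A_def)

lemma eq_0_if_A_apply_eq_0: "(\<And>\<phi>. test_fn \<phi> \<Longrightarrow> A \<phi> x = 0) \<Longrightarrow> x = 0"
  using hyperoperator by (simp add: hyperoperator_def)

lemma A_sum:
  "finite S \<Longrightarrow> (\<And>j. j \<in> S \<Longrightarrow> test_fn (g j)) \<Longrightarrow> A (\<lambda>x. \<Sum>j\<in>S. g j x) = (\<Sum>j\<in>S. A (g j))"
proof (induction S rule: finite_induct)
  case empty
  show ?case
    using A_add[OF test_fn_zero test_fn_zero] by simp
next
  case (insert a S)
  then show ?case
    using A_add[OF _ test_fn_sum[OF insert.hyps(1)], of "g a" g] by simp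
qed

text \<open>\<open>annihilates g\<close> is the paper's \<open>g(a) = 0\<close>.\<close>

definition annihilates :: "(real^'n \<Rightarrow> complex) \<Rightarrow> bool" where
  "annihilates g \<longleftrightarrow> (\<forall>\<phi>. test_fn \<phi> \<longrightarrow> A (\<lambda>\<xi>. g \<xi> * \<phi> \<xi>) = 0)"

text \<open>
  The value \<open>g(a)x\<close> does not depend on the representation \<open>x = A(\<phi>)y\<close>: applying any
  \<open>A(\<psi>)\<close> to the difference gives \<open>A(g\<psi>)\<close> applied to \<open>A(\<phi>)y - A(\<phi>')y' = 0\<close>, and
  condition (ii) of hyperoperators does the rest.
\<close>

lemma A_mult_apply_cong:
  assumes "smooth a" and "test_fn \<phi>" and "test_fn \<phi>'" and "A \<phi> y = A \<phi>' y'"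
  shows "A (\<lambda>\<xi>. a \<xi> * \<phi> \<xi>) y = A (\<lambda>\<xi>. a \<xi> * \<phi>' \<xi>) y'"
proof -
  have "A (\<lambda>\<xi>. a \<xi> * \<phi> \<xi>) y - A (\<lambda>\<xi>. a \<xi> * \<phi>' \<xi>) y' = 0"
  proof (rule eq_0_if_A_apply_eq_0)
    fix \<psi> :: "real^'n \<Rightarrow> complex" assume \<psi>: "test_fn \<psi>"
    have a\<psi>: "test_fn (\<lambda>\<xi>. a \<xi> * \<psi> \<xi>)"
      using test_fn_mult[OF assms(1) \<psi>] .
    have "A \<psi> (A (\<lambda>\<xi>. a \<xi> * \<theta> \<xi>) z) = A (\<lambda>\<xi>. a \<xi> * \<psi> \<xi>) (A \<theta> z)" if "test_fn \<theta>" for \<theta> z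
    proof -
      have "A \<psi> (A (\<lambda>\<xi>. a \<xi> * \<theta> \<xi>) z) = A (\<lambda>\<xi>. \<psi> \<xi> * (a \<xi> * \<theta> \<xi>)) z"
        using A_mult[OF \<psi> test_fn_mult[OF assms(1) that]] by simp
      also have "\<dots> = A (\<lambda>\<xi>. (a \<xi> * \<psi> \<xi>) * \<theta> \<xi>) z"
        by (simp add: mult_ac)
      also have "\<dots> = A (\<lambda>\<xi>. a \<xi> * \<psi> \<xi>) (A \<theta> z)"
        using A_mult[OF a\<psi> that] by simp
      finally show ?thesis .
    qed
    then show "A \<psi> (A (\<lambda>\<xi>. a \<xi> * \<phi> \<xi>) y - A (\<lambda>\<xi>. a \<xi> * \<phi>' \<xi>) y') = 0"
      using assms(2-4) by (simp add: blinfun.diff_right)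
  qed
  then show ?thesis
    by simp
qed

lemma fcalc_A_apply:
  assumes "smooth f" and "test_fn \<phi>"
  shows "fcalc A f (A \<phi> y) = (\<lambda>j. A (\<lambda>\<xi>. complex_of_real (f \<xi> $ j) * \<phi> \<xi>) y)"
proof -
  define P where "P = (\<lambda>(\<phi>', y'). test_fn \<phi>' \<and> A \<phi> y = A \<phi>' y')"
  obtain \<phi>' y' where chosen: "(SOME p. P p) = (\<phi>', y')"
    by fastforce
  moreover have "P (SOME p. P p)"
    by (rule someI[of P "(\<phi>, y)"]) (simp add: P_def assms(2))
  ultimately have "test_fn \<phi>'" and "A \<phi> y = A \<phi>' y'"
    by (simp_all add: P_def)
  then show ?thesis
    using A_mult_apply_cong[OF smooth_of_real_component[OF assms(1)] assms(2)] chosen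
    by (simp add: fcalc_def P_def)
qed

lemma fcalc_eq_0_iff_annihilates:
  assumes "smooth f"
  shows "(\<forall>x\<in>D_A A. fcalc A f x = (\<lambda>j. 0)) \<longleftrightarrow> (\<forall>j. annihilates (\<lambda>\<xi>. complex_of_real (f \<xi> $ j)))"
proof -
  have "(\<forall>x\<in>D_A A. fcalc A f x = (\<lambda>j. 0)) \<longleftrightarrow>
          (\<forall>\<phi> y j. test_fn \<phi> \<longrightarrow> A (\<lambda>\<xi>. complex_of_real (f \<xi> $ j) * \<phi> \<xi>) y = 0)"
    by (auto simp: D_A_def fcalc_A_apply[OF assms] fun_eq_iff)
  also have "\<dots> \<longleftrightarrow> (\<forall>j. annihilates (\<lambda>\<xi>. complex_of_real (f \<xi> $ j)))"
    by (auto simp: annihilates_def intro: blinfun_eqI)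
  finally show ?thesis .
qed

lemma A_compose_comp_eq_if_annihilates:
  fixes f :: "real^'n \<Rightarrow> real^'m::finite"
  assumes f: "smooth f" "proper_fun f" and ann: "\<And>j. annihilates (\<lambda>\<xi>. complex_of_real (f \<xi> $ j))"
    and \<psi>: "test_fn \<psi>" and \<phi>: "test_fn \<phi>"
  shows "A (\<lambda>\<xi>. \<psi> (f \<xi>)) o\<^sub>L A \<phi> = cscaleL J (\<psi> 0) (A \<phi>)"
proof -
  obtain h where h: "\<And>j. smooth (h j)" and \<psi>_eq: "\<And>\<eta>. \<psi> \<eta> = \<psi> 0 + (\<Sum>j\<in>UNIV. (\<eta> $ j) *\<^sub>R h j \<eta>)"
    using hadamard_coordinates[of \<psi>] \<psi> unfolding test_fn_def by blast
  define g where "g = (\<lambda>j \<xi>. complex_of_real (f \<xi> $ j) * (h j (f \<xi>) * \<phi> \<xi>))"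
  have h\<phi>: "test_fn (\<lambda>\<xi>. h j (f \<xi>) * \<phi> \<xi>)" for j
    using test_fn_mult[OF smooth_compose[OF h f(1)] \<phi>] .
  have g: "test_fn (g j)" "A (g j) = 0" for j
    using test_fn_mult[OF smooth_of_real_component[OF f(1)] h\<phi>] ann[of j] h\<phi>
    by (simp_all add: g_def annihilates_def)
  have "(\<lambda>\<xi>. \<psi> (f \<xi>) * \<phi> \<xi>) = (\<lambda>\<xi>. \<psi> 0 * \<phi> \<xi> + (\<Sum>j\<in>UNIV. g j \<xi>))"
  proof
    fix \<xi>
    show "\<psi> (f \<xi>) * \<phi> \<xi> = \<psi> 0 * \<phi> \<xi> + (\<Sum>j\<in>UNIV. g j \<xi>)"
      using \<psi>_eq[of "f \<xi>"]
      by (simp add: g_def distrib_right sum_distrib_right scaleR_conv_of_real mult.assoc)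
  qed
  then have "A (\<lambda>\<xi>. \<psi> (f \<xi>)) o\<^sub>L A \<phi> = A (\<lambda>\<xi>. \<psi> 0 * \<phi> \<xi> + (\<Sum>j\<in>UNIV. g j \<xi>))"
    using A_mult[OF test_fn_compose[OF f \<psi>] \<phi>] by simp
  also have "\<dots> = cscaleL J (\<psi> 0) (A \<phi>)"
    using A_add[OF test_fn_mult[OF smooth_const \<phi>] test_fn_sum[of UNIV g, OF finite g(1)]]
      A_cmult[OF \<phi>] A_sum[of UNIV g, OF finite g(1)] g(2) by simp
  finally show ?thesis .
qed

lemma is_zero_hyp_pushforward_if_annihilates:
  fixes f :: "real^'n \<Rightarrow> real^'m::finite"
  assumes f: "smooth f" "proper_fun f" and ann: "\<And>j. annihilates (\<lambda>\<xi>. complex_of_real (f \<xi> $ j))"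
  shows "is_zero_hyp J (pushforward f A)"
  unfolding is_zero_hyp_def pushforward_def o_def
proof (intro allI impI)
  fix \<psi> :: "real^'m \<Rightarrow> complex" assume \<psi>: "test_fn \<psi>"
  have "A (\<lambda>\<xi>. \<psi> (f \<xi>)) (A \<phi> y) = cscaleL J (\<psi> 0) id_blinfun (A \<phi> y)" if "test_fn \<phi>" for \<phi> y
    using A_compose_comp_eq_if_annihilates[OF f ann \<psi> that]
    by (metis blinfun_apply_blinfun_compose cscaleL_id_comp)
  then show "A (\<lambda>\<xi>. \<psi> (f \<xi>)) = cscaleL J (\<psi> 0) id_blinfun"
    by (intro blinfun_eq_on_dense[OF closure_D_A]) (auto simp: D_A_def)
qed

lemma annihilates_if_is_zero_hyp_pushforward:
  fixes f :: "real^'n \<Rightarrow> real^'m::finite"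
  assumes f: "smooth f" "proper_fun f" and zero: "is_zero_hyp J (pushforward f A)"
  shows "annihilates (\<lambda>\<xi>. complex_of_real (f \<xi> $ j))"
  unfolding annihilates_def
proof (intro allI impI)
  fix \<phi> :: "real^'n \<Rightarrow> complex" assume \<phi>: "test_fn \<phi>"
  obtain \<beta> :: "real^'m \<Rightarrow> real" where \<beta>: "test_fn (\<lambda>\<eta>. complex_of_real (\<beta> \<eta>))" and "\<beta> 0 = 1"
    using exists_test_fn_eq_1_at_0 by blast
  define B where "B = (\<lambda>\<eta>. complex_of_real (\<beta> \<eta>))"
  define \<psi> where "\<psi> = (\<lambda>\<eta>::real^'m. complex_of_real (\<eta> $ j) * B \<eta>)"
  define fj\<phi> where "fj\<phi> = (\<lambda>\<xi>. complex_of_real (f \<xi> $ j) * \<phi> \<xi>)"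
  have B: "test_fn B"
    unfolding B_def by (fact \<beta>)
  have \<psi>: "test_fn \<psi>"
    unfolding \<psi>_def by (rule test_fn_mult[OF smooth_of_real_component[OF smooth_id] B])
  have fj\<phi>: "test_fn fj\<phi>"
    unfolding fj\<phi>_def by (rule test_fn_mult[OF smooth_of_real_component[OF f(1)] \<phi>])
  have zero': "A (\<lambda>\<xi>. \<theta> (f \<xi>)) = cscaleL J (\<theta> 0) id_blinfun" if "test_fn \<theta>" for \<theta>
    using zero that by (simp add: is_zero_hyp_def pushforward_def o_def)
  have "A fj\<phi> = A fj\<phi> o\<^sub>L A (\<lambda>\<xi>. B (f \<xi>))"
    using zero'[OF B] \<open>\<beta> 0 = 1\<close> by (auto intro!: blinfun_eqI simp: B_def cscaleL_def)
  also have "\<dots> = A (\<lambda>\<xi>. \<phi> \<xi> * \<psi> (f \<xi>))"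
    using A_mult[OF fj\<phi> test_fn_compose[OF f B]] by (simp add: fj\<phi>_def \<psi>_def mult_ac)
  also have "\<dots> = A \<phi> o\<^sub>L A (\<lambda>\<xi>. \<psi> (f \<xi>))"
    using A_mult[OF \<phi> test_fn_compose[OF f \<psi>]] .
  also have "\<dots> = 0"
    using zero'[OF \<psi>] by (simp add: \<psi>_def cscaleL_def)
  finally show "A (\<lambda>\<xi>. complex_of_real (f \<xi> $ j) * \<phi> \<xi>) = 0"
    unfolding fj\<phi>_def .
qed

lemma is_zero_hyp_pushforward_iff_fcalc_eq_0:
  fixes f :: "real^'n \<Rightarrow> real^'m::finite"
  assumes "smooth f" and "proper_fun f"
  shows "is_zero_hyp J (pushforward f A) \<longleftrightarrow> (\<forall>x\<in>D_A A. fcalc A f x = (\<lambda>j. 0))"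
  using is_zero_hyp_pushforward_if_annihilates[OF assms] annihilates_if_is_zero_hyp_pushforward[OF assms]
    fcalc_eq_0_iff_annihilates[OF assms(1)] by blast

end

theorem corollary4p3:
  fixes J :: "'x::banach \<Rightarrow>\<^sub>L 'x"
    and A :: "(real^'n::finite \<Rightarrow> complex) \<Rightarrow> ('x \<Rightarrow>\<^sub>L 'x)"
    and f :: "real^'n \<Rightarrow> real^'m::finite"
  assumes "complex_structure J"
    and "hyperoperator J A"
    and "smooth f"
    and "proper_fun f"
  shows "(is_zero_hyp J (pushforward f A) \<longleftrightarrow> (\<forall>x\<in>D_A A. fcalc A f x = (\<lambda>j. 0)))
       \<and> (is_zero_hyp J A \<longleftrightarrow> (\<forall>x\<in>D_A A. fcalc A (\<lambda>\<xi>::real^'n. \<xi>) x = (\<lambda>j. 0)))"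
proof -
  interpret hyperop J A
    by unfold_locales (fact assms(2))
  have "proper_fun (\<lambda>\<xi>::real^'n. \<xi>)" and "pushforward (\<lambda>\<xi>::real^'n. \<xi>) A = A"
    by (simp_all add: proper_fun_def pushforward_def o_def)
  then show ?thesis
    using is_zero_hyp_pushforward_iff_fcalc_eq_0[OF assms(3,4)]
      is_zero_hyp_pushforward_iff_fcalc_eq_0[OF smooth_id] by simp
qed

end
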